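(* Let $(M,g)$ be a semi-regular spacetime. Then its Einstein density tensor of weight $2$, $G\det g$, is smooth: in any local coordinate chart, the functions $G_{ab}\det g$ (and $G^{ab}\det g$), defined at the points where $g$ is nondegenerate, agree there with smooth functions on the whole chart domain.
   Context: A singular semi-Riemannian manifold $(M,g)$ is a smooth manifold $M$ with a smooth symmetric bilinear form $g$ on $TM$, possibly degenerate and with variable signature. For $u\in T_pM$ let $u^\flat(v)=g(u,v)$; $T^\bullet_pM=\{u^\flat:u\in T_pM\}$, with nondegenerate inner product $\langle\langle u^\flat,v^\flat\rangle\rangle:=g(u,v)$; $\mathcal A^\bullet(M)$ is the set of smooth $1$-forms with values in $T^\bullet_pM$ at each $p$. The Koszul form is $\mathcal K(X,Y,Z)=\tfrac12\{Xg(Y,Z)+Yg(Z,X)-Zg(X,Y)-g(X,[Y,Z])+g(Y,[Z,X])+g(Z,[X,Y])\}$, $\nabla^\flat_XY:=\mathcal K(X,Y,\cdot)$. If $\nabla^\flat_XY\in\mathcal A^\bullet(M)$ for all smooth vector fields $X,Y$, then for $\omega\in\mathcal A^\bullet(M)$ define $(\nabla_X\omega)(Y)=X(\omega(Y))-\langle\langle\nabla^\flat_XY,\omega\rangle\rangle$. $(M,g)$ is semi-regular if for all smooth vector fields $X,Y,Z$ one has $\nabla^\flat_XY\in\mathcal A^\bullet(M)$ and $\nabla_Z(\nabla^\flat_XY)\in\mathcal A^\bullet(M)$ (in particular smooth). A semi-regular spacetime is a $4$-dimensional semi-regular singular semi-Riemannian manifold whose metric has signature with $3$ positive and $1$ negative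 eigenvalue at the points where it is nondegenerate. At points where $g$ is nondegenerate, $G=\mathrm{Ric}-\tfrac12 s g$ is the usual Einstein tensor of $g$ (Ricci tensor $\mathrm{Ric}$, scalar curvature $s$), and $\det g$ is the determinant of the component matrix of $g$ in the chart. *)

theory Defs
  imports "HOL-Analysis.Analysis"
begin

text \<open>Local (chart) rendering: points of the chart domain are in real^4,
  a metric is a matrix field g p $ a $ b, vector fields and covector fields
  are given by their component functions U -> real^4.\<close>

type_synonym pt = "real^4"

definition partial :: "4 \<Rightarrow> (pt \<Rightarrow> real) \<Rightarrow> pt \<Rightarrow> real" where
  "partial i f x = deriv (\<lambda>t. f (x + t *\<^sub>R axis i 1)) 0"

fun Ck_on :: "nat \<Rightarrow> pt set \<Rightarrow> (pt \<Rightarrow> real) \<Rightarrow> bool" where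
  "Ck_on 0 U f = continuous_on U f"
| "Ck_on (Suc k) U f =
     ((\<forall>x\<in>U. \<forall>i. (\<lambda>t. f (x + t *\<^sub>R axis i 1)) differentiable (at 0))
      \<and> (\<forall>i. Ck_on k U (partial i f)))"

definition smooth_on :: "pt set \<Rightarrow> (pt \<Rightarrow> real) \<Rightarrow> bool" where
  "smooth_on U f \<longleftrightarrow> (\<forall>k. Ck_on k U f)"

definition smooth_field :: "pt set \<Rightarrow> (pt \<Rightarrow> real^4) \<Rightarrow> bool" where
  "smooth_field U X \<longleftrightarrow> (\<forall>k. smooth_on U (\<lambda>p. X p $ k))"

type_synonym metric = "pt \<Rightarrow> real^4^4"

definition gval :: "metric \<Rightarrow> pt \<Rightarrow> real^4 \<Rightarrow> real^4 \<Rightarrow> real" where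
  "gval g p u v = (\<Sum>a\<in>UNIV. \<Sum>b\<in>UNIV. g p $ a $ b * u $ a * v $ b)"

definition flat :: "metric \<Rightarrow> pt \<Rightarrow> real^4 \<Rightarrow> real^4" where
  "flat g p u = (\<chi> b. \<Sum>a\<in>UNIV. u $ a * g p $ a $ b)"

definition Tbullet :: "metric \<Rightarrow> pt \<Rightarrow> (real^4) set" where
  "Tbullet g p = range (flat g p)"

definition innerb :: "metric \<Rightarrow> pt \<Rightarrow> real^4 \<Rightarrow> real^4 \<Rightarrow> real" where
  "innerb g p \<alpha> \<beta> = gval g p (SOME u. flat g p u = \<alpha>) (SOME v. flat g p v = \<beta>)"

definition dir :: "(pt \<Rightarrow> real^4) \<Rightarrow> (pt \<Rightarrow> real) \<Rightarrow> pt \<Rightarrow> real" where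
  "dir X f p = (\<Sum>j\<in>UNIV. X p $ j * partial j f p)"

definition lie :: "(pt \<Rightarrow> real^4) \<Rightarrow> (pt \<Rightarrow> real^4) \<Rightarrow> pt \<Rightarrow> real^4" where
  "lie X Y p = (\<chi> k. dir X (\<lambda>q. Y q $ k) p - dir Y (\<lambda>q. X q $ k) p)"

definition koszul :: "metric \<Rightarrow> (pt \<Rightarrow> real^4) \<Rightarrow> (pt \<Rightarrow> real^4) \<Rightarrow> (pt \<Rightarrow> real^4) \<Rightarrow> pt \<Rightarrow> real" where
  "koszul g X Y Z p = 1/2 * (dir X (\<lambda>q. gval g q (Y q) (Z q)) p
      + dir Y (\<lambda>q. gval g q (Z q) (X q)) p
      - dir Z (\<lambda>q. gval g q (X q) (Y q)) p
      - gval g p (X p) (lie Y Z p)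
      + gval g p (Y p) (lie Z X p)
      + gval g p (Z p) (lie X Y p))"

definition coord_field :: "4 \<Rightarrow> pt \<Rightarrow> real^4" where
  "coord_field j = (\<lambda>q. axis j 1)"

definition nabla_flat :: "metric \<Rightarrow> (pt \<Rightarrow> real^4) \<Rightarrow> (pt \<Rightarrow> real^4) \<Rightarrow> pt \<Rightarrow> real^4" where
  "nabla_flat g X Y p = (\<chi> j. koszul g X Y (coord_field j) p)"

text \<open>(nabla_Z omega)(Y) = Z(omega(Y)) - <<nabla^flat_Z Y, omega>>, components on coordinate fields.\<close>
definition cov_deriv :: "metric \<Rightarrow> (pt \<Rightarrow> real^4) \<Rightarrow> (pt \<Rightarrow> real^4) \<Rightarrow> pt \<Rightarrow> real^4" where
  "cov_deriv g Z \<omega> p = (\<chi> j. dir Z (\<lambda>q. \<omega> q $ j) p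
       - innerb g p (nabla_flat g Z (coord_field j) p) (\<omega> p))"

definition in_Abullet :: "metric \<Rightarrow> pt set \<Rightarrow> (pt \<Rightarrow> real^4) \<Rightarrow> bool" where
  "in_Abullet g U \<omega> \<longleftrightarrow> smooth_field U \<omega> \<and> (\<forall>p\<in>U. \<omega> p \<in> Tbullet g p)"

definition semi_regular :: "metric \<Rightarrow> pt set \<Rightarrow> bool" where
  "semi_regular g U \<longleftrightarrow>
    (\<forall>X Y Z. smooth_field U X \<and> smooth_field U Y \<and> smooth_field U Z \<longrightarrow>
       in_Abullet g U (nabla_flat g X Y) \<and>
       in_Abullet g U (cov_deriv g Z (nabla_flat g X Y)))"

definition singular_semi_riemannian :: "metric \<Rightarrow> pt set \<Rightarrow> bool" where
  "singular_semi_riemannian g U \<longleftrightarrow> open U \<and>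
     (\<forall>a b. smooth_on U (\<lambda>p. g p $ a $ b)) \<and>
     (\<forall>p\<in>U. \<forall>a b. g p $ a $ b = g p $ b $ a)"

text \<open>Lorentzian signature (3 positive, 1 negative eigenvalue, with multiplicity)
  at nondegenerate points.\<close>
definition lorentz_where_nondeg :: "metric \<Rightarrow> pt set \<Rightarrow> bool" where
  "lorentz_where_nondeg g U \<longleftrightarrow> (\<forall>p\<in>U. det (g p) \<noteq> 0 \<longrightarrow>
     (\<exists>ev::real^4. ev $ 1 < 0 \<and> ev $ 2 > 0 \<and> ev $ 3 > 0 \<and> ev $ 4 > 0 \<and>
        (\<forall>x. det (g p - x *\<^sub>R mat 1) = (\<Prod>i\<in>UNIV. ev $ i - x))))"

definition semi_regular_spacetime :: "metric \<Rightarrow> pt set \<Rightarrow> bool" where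
  "semi_regular_spacetime g U \<longleftrightarrow>
     singular_semi_riemannian g U \<and> semi_regular g U \<and> lorentz_where_nondeg g U"

definition ginv :: "metric \<Rightarrow> pt \<Rightarrow> real^4^4" where
  "ginv g p = matrix_inv (g p)"

definition christoffel :: "metric \<Rightarrow> pt \<Rightarrow> 4 \<Rightarrow> 4 \<Rightarrow> 4 \<Rightarrow> real" where
  "christoffel g p k i j = 1/2 * (\<Sum>l\<in>UNIV. ginv g p $ k $ l *
      (partial i (\<lambda>q. g q $ j $ l) p + partial j (\<lambda>q. g q $ i $ l) p
       - partial l (\<lambda>q. g q $ i $ j) p))"

definition riemann :: "metric \<Rightarrow> pt \<Rightarrow> 4 \<Rightarrow> 4 \<Rightarrow> 4 \<Rightarrow> 4 \<Rightarrow> real" where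
  "riemann g p r s m n =
     partial m (\<lambda>q. christoffel g q r n s) p - partial n (\<lambda>q. christoffel g q r m s) p
     + (\<Sum>l\<in>UNIV. christoffel g p r m l * christoffel g p l n s
                 - christoffel g p r n l * christoffel g p l m s)"

definition ricci :: "metric \<Rightarrow> pt \<Rightarrow> 4 \<Rightarrow> 4 \<Rightarrow> real" where
  "ricci g p s n = (\<Sum>r\<in>UNIV. riemann g p r s r n)"

definition scalar_curv :: "metric \<Rightarrow> pt \<Rightarrow> real" where
  "scalar_curv g p = (\<Sum>s\<in>UNIV. \<Sum>n\<in>UNIV. ginv g p $ s $ n * ricci g p s n)"

definition einstein :: "metric \<Rightarrow> pt \<Rightarrow> 4 \<Rightarrow> 4 \<Rightarrow> real" where
  "einstein g p a b = ricci g p a b - 1/2 * scalar_curv g p * g p $ a $ b"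

definition einstein_up :: "metric \<Rightarrow> pt \<Rightarrow> 4 \<Rightarrow> 4 \<Rightarrow> real" where
  "einstein_up g p a b =
     (\<Sum>c\<in>UNIV. \<Sum>d\<in>UNIV. ginv g p $ a $ c * ginv g p $ b $ d * einstein g p c d)"

end

theory Submission
  imports Defs
begin

text \<open>
  Away from the degenerate points the Einstein tensor is a rational function of the metric and its
  curvature, with denominators coming from \<open>g\<inverse>\<close>.  Semi-regularity says exactly that the
  lowered curvature \<open>R\<^sub>q\<^sub>s\<^sub>m\<^sub>n\<close>, defined through \<open>\<nabla>\<^sup>\<flat>\<close> without inverting \<open>g\<close>,
  is smooth on the whole chart.  In
  \<open>G\<^sup>a\<^sup>b = g\<^sup>a\<^sup>c g\<^sup>b\<^sup>d g\<^sup>r\<^sup>q R\<^sub>q\<^sub>c\<^sub>r\<^sub>d - \<onehalf> g\<^sup>a\<^sup>b g\<^sup>s\<^sup>n g\<^sup>r\<^sup>q R\<^sub>q\<^sub>s\<^sub>r\<^sub>n\<close>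
  the antisymmetries of \<open>R\<close> assemble the cubic expressions in \<open>g\<inverse>\<close> into \<open>3 \<times> 3\<close> minors of
  \<open>g\<inverse>\<close>, and by Jacobi's theorem on complementary minors \<open>det g\<close> times such a minor is, up to
  sign, an entry of \<open>g\<close>.  So \<open>G\<^sup>a\<^sup>b det g\<close> is a polynomial in \<open>g\<close> and \<open>R\<close>, hence smooth,
  and lowering the indices with \<open>g\<close> gives the same for \<open>G\<^sub>a\<^sub>b det g\<close>.
\<close>

section \<open>Partial derivatives and smooth functions on a chart\<close>

definition partial_differentiable :: "(pt \<Rightarrow> real) \<Rightarrow> pt \<Rightarrow> 4 \<Rightarrow> bool" where
  "partial_differentiable f x i \<longleftrightarrow> (\<lambda>t. f (x + t *\<^sub>R axis i 1)) differentiable (at 0)"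

lemma partial_differentiable_has_derivative:
  "partial_differentiable f x i \<Longrightarrow>
     ((\<lambda>t. f (x + t *\<^sub>R axis i 1)) has_real_derivative partial i f x) (at 0)"
  unfolding partial_differentiable_def partial_def using DERIV_deriv_iff_real_differentiable by blast

lemma eventually_eq_along_line:
  fixes x :: pt
  assumes "open U" "x \<in> U" "\<forall>y\<in>U. f y = h y"
  shows "eventually (\<lambda>t::real. f (x + t *\<^sub>R axis i 1) = h (x + t *\<^sub>R axis i 1)) (nhds 0)"
proof -
  obtain e where "e > 0" "ball x e \<subseteq> U"
    using assms(1,2) openE by blast
  then have "eventually (\<lambda>t::real. x + t *\<^sub>R axis i 1 \<in> U) (nhds 0)"
    unfolding eventually_nhds_metric by (intro exI[of _ e]) (auto simp: dist_norm subset_iff)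
  then show ?thesis
    by eventually_elim (use assms(3) in auto)
qed

lemma partial_cong:
  "open U \<Longrightarrow> x \<in> U \<Longrightarrow> \<forall>y\<in>U. f y = h y \<Longrightarrow> partial i f x = partial i h x"
  unfolding partial_def by (rule deriv_cong_ev[OF eventually_eq_along_line]) simp_all

lemma partial_differentiable_cong:
  assumes "open U" "x \<in> U" "\<forall>y\<in>U. f y = h y"
  shows "partial_differentiable f x i \<longleftrightarrow> partial_differentiable h x i"
  unfolding partial_differentiable_def DERIV_deriv_iff_real_differentiable[symmetric]
  using DERIV_cong_ev[OF refl eventually_eq_along_line[OF assms, of i]]
    deriv_cong_ev[OF eventually_eq_along_line[OF assms, of i]]
  by metis

lemma Ck_on_Suc_iff:
  "Ck_on (Suc k) U f \<longleftrightarrow> (\<forall>x\<in>U. \<forall>i. partial_differentiable f x i) \<and> (\<forall>i. Ck_on k U (partial i f))"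
  by (simp add: partial_differentiable_def)

declare Ck_on.simps(2) [simp del]

lemma Ck_on_cong:
  assumes "open U" "\<forall>y\<in>U. f y = h y"
  shows "Ck_on k U f = Ck_on k U h"
  using assms(2)
proof (induction k arbitrary: f h)
  case 0
  then show ?case using continuous_on_cong by force
next
  case (Suc k)
  have "\<forall>y\<in>U. partial i f y = partial i h y" for i
    using partial_cong[OF assms(1)] Suc.prems by blast
  then show ?case
    unfolding Ck_on_Suc_iff using Suc.IH partial_differentiable_cong[OF assms(1) _ Suc.prems] by blast
qed

lemma smooth_on_partial_differentiable: "smooth_on U f \<Longrightarrow> x \<in> U \<Longrightarrow> partial_differentiable f x i"
  unfolding smooth_on_def using Ck_on_Suc_iff by blast

lemma smooth_on_partial: "smooth_on U f \<Longrightarrow> smooth_on U (partial i f)"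
  unfolding smooth_on_def using Ck_on_Suc_iff by blast

lemma smooth_on_imp_continuous_on: "smooth_on U f \<Longrightarrow> continuous_on U f"
  unfolding smooth_on_def by (metis Ck_on.simps(1))

lemma partial_const [simp]: "partial i (\<lambda>y. c) = (\<lambda>y. 0)"
  by (simp add: partial_def fun_eq_iff)

lemma partial_differentiable_const: "partial_differentiable (\<lambda>y. c) x i"
  unfolding partial_differentiable_def by simp

lemma partial_add:
  "partial_differentiable f x i \<Longrightarrow> partial_differentiable h x i \<Longrightarrow>
     partial i (\<lambda>y. f y + h y) x = partial i f x + partial i h x"
  unfolding partial_def[of _ "\<lambda>y. f y + h y"]
  by (intro DERIV_imp_deriv DERIV_add partial_differentiable_has_derivative)

lemma partial_mult:
  assumes "partial_differentiable f x i" "partial_differentiable h x i"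
  shows "partial i (\<lambda>y. f y * h y) x = partial i f x * h x + f x * partial i h x"
  using DERIV_mult[OF partial_differentiable_has_derivative[OF assms(1)]
      partial_differentiable_has_derivative[OF assms(2)]]
  unfolding partial_def by (simp add: DERIV_imp_deriv)

lemma partial_differentiable_add:
  "partial_differentiable f x i \<Longrightarrow> partial_differentiable h x i \<Longrightarrow>
     partial_differentiable (\<lambda>y. f y + h y) x i"
  unfolding partial_differentiable_def by (rule differentiable_add)

lemma partial_differentiable_mult:
  "partial_differentiable f x i \<Longrightarrow> partial_differentiable h x i \<Longrightarrow>
     partial_differentiable (\<lambda>y. f y * h y) x i"
  unfolding partial_differentiable_def by (rule differentiable_mult)

lemma partial_differentiable_sum:
  "(\<And>a. a \<in> A \<Longrightarrow> partial_differentiable (f a) x i) \<Longrightarrow>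
     partial_differentiable (\<lambda>y. \<Sum>a\<in>A. f a y) x i"
  by (induction A rule: infinite_finite_induct)
    (simp_all add: partial_differentiable_const partial_differentiable_add)

lemma partial_sum:
  "(\<And>a. a \<in> A \<Longrightarrow> partial_differentiable (f a) x i) \<Longrightarrow>
     partial i (\<lambda>y. \<Sum>a\<in>A. f a y) x = (\<Sum>a\<in>A. partial i (f a) x)"
  by (induction A rule: infinite_finite_induct)
    (simp_all add: partial_add partial_differentiable_sum)

lemma Ck_on_const: "Ck_on k U (\<lambda>y. c)"
  by (induction k arbitrary: c) (simp_all add: Ck_on_Suc_iff partial_differentiable_const)

lemma Ck_on_add:
  assumes "open U"
  shows "Ck_on k U f \<Longrightarrow> Ck_on k U h \<Longrightarrow> Ck_on k U (\<lambda>y. f y + h y)"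
proof (induction k arbitrary: f h)
  case 0
  then show ?case by (simp add: continuous_on_add)
next
  case (Suc k)
  have derivs: "\<forall>y\<in>U. partial i (\<lambda>y. f y + h y) y = partial i f y + partial i h y" for i
    using Suc.prems partial_add unfolding Ck_on_Suc_iff by blast
  have "Ck_on k U (\<lambda>y. partial i f y + partial i h y)" for i
    using Suc.prems Suc.IH unfolding Ck_on_Suc_iff by blast
  then have "Ck_on k U (partial i (\<lambda>y. f y + h y))" for i
    using Ck_on_cong[OF assms derivs] by blast
  moreover have "\<forall>x\<in>U. \<forall>i. partial_differentiable (\<lambda>y. f y + h y) x i"
    using Suc.prems partial_differentiable_add unfolding Ck_on_Suc_iff by blast
  ultimately show ?case
    unfolding Ck_on_Suc_iff by blast
qed

lemma smooth_on_const: "smooth_on U (\<lambda>y. c)"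
  unfolding smooth_on_def using Ck_on_const by blast

lemma smooth_on_add: "open U \<Longrightarrow> smooth_on U f \<Longrightarrow> smooth_on U h \<Longrightarrow> smooth_on U (\<lambda>y. f y + h y)"
  unfolding smooth_on_def using Ck_on_add by blast

lemma smooth_on_mult:
  assumes U: "open U"
  shows "smooth_on U f \<Longrightarrow> smooth_on U h \<Longrightarrow> smooth_on U (\<lambda>y. f y * h y)"
proof -
  have "smooth_on U f \<Longrightarrow> smooth_on U h \<Longrightarrow> Ck_on k U (\<lambda>y. f y * h y)" for k f h
  proof (induction k arbitrary: f h)
    case 0
    then show ?case using smooth_on_imp_continuous_on by (simp add: continuous_on_mult)
  next
    case (Suc k)
    have derivs: "\<forall>y\<in>U. partial i (\<lambda>y. f y * h y) y = partial i f y * h y + f y * partial i h y"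
      for i using Suc.prems partial_mult smooth_on_partial_differentiable by blast
    have "Ck_on k U (\<lambda>y. partial i f y * h y + f y * partial i h y)" for i
      by (rule Ck_on_add[OF U]) (use Suc.IH Suc.prems smooth_on_partial in blast)+
    then have "Ck_on k U (partial i (\<lambda>y. f y * h y))" for i
      using Ck_on_cong[OF U derivs] by blast
    moreover have "\<forall>x\<in>U. \<forall>i. partial_differentiable (\<lambda>y. f y * h y) x i"
      using Suc.prems partial_differentiable_mult smooth_on_partial_differentiable by blast
    ultimately show ?case
      unfolding Ck_on_Suc_iff by blast
  qed
  then show "smooth_on U f \<Longrightarrow> smooth_on U h \<Longrightarrow> smooth_on U (\<lambda>y. f y * h y)"
    unfolding smooth_on_def by blast
qed

lemma smooth_on_sum:
  "open U \<Longrightarrow> (\<And>a. a \<in> A \<Longrightarrow> smooth_on U (f a)) \<Longrightarrow> smooth_on U (\<lambda>y. \<Sum>a\<in>A. f a y)"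
  by (induction A rule: infinite_finite_induct) (simp_all add: smooth_on_const smooth_on_add)

lemma smooth_on_diff:
  assumes "open U" "smooth_on U f" "smooth_on U h"
  shows "smooth_on U (\<lambda>y. f y - h y)"
  using smooth_on_add[OF assms(1,2) smooth_on_mult[OF assms(1) smooth_on_const assms(3), of "-1"]]
  by simp

lemma smooth_on_prod:
  "open U \<Longrightarrow> (\<And>a. a \<in> A \<Longrightarrow> smooth_on U (f a)) \<Longrightarrow> smooth_on U (\<lambda>y. \<Prod>a\<in>A. f a y)"
  by (induction A rule: infinite_finite_induct) (simp_all add: smooth_on_const smooth_on_mult)

lemma smooth_on_det:
  fixes M :: "pt \<Rightarrow> real^'n^'n"
  shows "open U \<Longrightarrow> (\<And>i j. smooth_on U (\<lambda>p. M p $ i $ j)) \<Longrightarrow> smooth_on U (\<lambda>p. det (M p))"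
  unfolding det_def by (intro smooth_on_sum smooth_on_mult smooth_on_const smooth_on_prod)

lemma has_real_derivative_along_line:
  fixes z :: pt
  assumes "smooth_on U h" "z + t *\<^sub>R axis i 1 \<in> U"
  shows "((\<lambda>u. h (z + u *\<^sub>R axis i 1)) has_real_derivative partial i h (z + t *\<^sub>R axis i 1)) (at t)"
proof -
  have d: "((\<lambda>u. h ((z + t *\<^sub>R axis i 1) + u *\<^sub>R axis i 1)) has_real_derivative partial i h (z + t *\<^sub>R axis i 1)) (at 0)"
    using partial_differentiable_has_derivative[OF smooth_on_partial_differentiable[OF assms]] .
  have e: "(\<lambda>u. h ((z + t *\<^sub>R axis i 1) + u *\<^sub>R axis i 1)) = (\<lambda>u. (\<lambda>u. h (z + u *\<^sub>R axis i 1)) (u + t))"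
    by (simp add: algebra_simps scaleR_add_left)
  have "((\<lambda>u. h (z + u *\<^sub>R axis i 1)) has_real_derivative partial i h (z + t *\<^sub>R axis i 1)) (at (0 + t))"
    using d unfolding e by (subst DERIV_shift) simp
  then show ?thesis
    by simp
qed

lemma mean_value_along_line:
  fixes z :: pt
  assumes "smooth_on U h" "s > 0" "\<And>t. 0 \<le> t \<Longrightarrow> t \<le> s \<Longrightarrow> z + t *\<^sub>R axis i 1 \<in> U"
  shows "\<exists>\<sigma>>0. \<sigma> < s \<and> h (z + s *\<^sub>R axis i 1) - h z = s * partial i h (z + \<sigma> *\<^sub>R axis i 1)"
proof -
  have "((\<lambda>u. h (z + u *\<^sub>R axis i 1)) has_real_derivative partial i h (z + t *\<^sub>R axis i 1)) (at t)"
    if "0 \<le> t" "t \<le> s" for t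
    using has_real_derivative_along_line[OF assms(1) assms(3)[OF that]] .
  from MVT2[OF assms(2) this] show ?thesis
    by auto
qed

lemma second_difference_mean_value:
  fixes x :: pt
  assumes U: "open U" and f: "smooth_on U f" and s: "s > 0"
    and inU: "\<And>a b. \<bar>a\<bar> \<le> s \<Longrightarrow> \<bar>b\<bar> \<le> s \<Longrightarrow> x + a *\<^sub>R axis i 1 + b *\<^sub>R axis j 1 \<in> U"
  shows "\<exists>\<sigma> \<tau>. 0 < \<sigma> \<and> \<sigma> < s \<and> 0 < \<tau> \<and> \<tau> < s \<and>
     f (x + s *\<^sub>R axis i 1 + s *\<^sub>R axis j 1) - f (x + s *\<^sub>R axis i 1) - f (x + s *\<^sub>R axis j 1) + f x
       = s * s * partial j (partial i f) (x + \<sigma> *\<^sub>R axis i 1 + \<tau> *\<^sub>R axis j 1)"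
proof -
  define e where "e = (axis i 1 :: pt)"
  define d where "d = (axis j 1 :: pt)"
  have in_chart: "\<And>a b. \<bar>a\<bar> \<le> s \<Longrightarrow> \<bar>b\<bar> \<le> s \<Longrightarrow> x + a *\<^sub>R e + b *\<^sub>R d \<in> U"
    using inU unfolding e_def d_def by blast
  define \<phi> where "\<phi> t = f ((x + s *\<^sub>R d) + t *\<^sub>R e) - f (x + t *\<^sub>R e)" for t
  have "(\<phi> has_real_derivative (partial i f ((x + s *\<^sub>R d) + t *\<^sub>R e) - partial i f (x + t *\<^sub>R e))) (at t)"
    if "0 \<le> t" "t \<le> s" for t
  proof -
    have "(x + s *\<^sub>R d) + t *\<^sub>R e \<in> U" "x + t *\<^sub>R e \<in> U"
      using in_chart[of t s] in_chart[of t 0] that s by (simp_all add: algebra_simps)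
    then show ?thesis
      unfolding \<phi>_def e_def by (intro DERIV_diff has_real_derivative_along_line[OF f]) (auto simp: e_def)
  qed
  from MVT2[OF s this] obtain \<sigma> where \<sigma>: "0 < \<sigma>" "\<sigma> < s"
    "\<phi> s - \<phi> 0 = (s - 0) * (partial i f ((x + s *\<^sub>R d) + \<sigma> *\<^sub>R e) - partial i f (x + \<sigma> *\<^sub>R e))"
    by auto
  have "\<exists>\<tau>>0. \<tau> < s \<and> partial i f ((x + \<sigma> *\<^sub>R e) + s *\<^sub>R d) - partial i f (x + \<sigma> *\<^sub>R e)
      = s * partial j (partial i f) ((x + \<sigma> *\<^sub>R e) + \<tau> *\<^sub>R d)"
    unfolding d_def
    by (rule mean_value_along_line[OF smooth_on_partial[OF f] s]) (use in_chart \<sigma> in \<open>auto simp: d_def\<close>)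
  then obtain \<tau> where \<tau>: "0 < \<tau>" "\<tau> < s" "partial i f ((x + \<sigma> *\<^sub>R e) + s *\<^sub>R d) - partial i f (x + \<sigma> *\<^sub>R e)
      = s * partial j (partial i f) ((x + \<sigma> *\<^sub>R e) + \<tau> *\<^sub>R d)"
    by blast
  have translate: "(x + s *\<^sub>R d) + \<sigma> *\<^sub>R e = (x + \<sigma> *\<^sub>R e) + s *\<^sub>R d"
    by (simp add: algebra_simps)
  have "f (x + s *\<^sub>R e + s *\<^sub>R d) - f (x + s *\<^sub>R e) - f (x + s *\<^sub>R d) + f x = \<phi> s - \<phi> 0"
    unfolding \<phi>_def by (simp add: algebra_simps)
  also have "\<dots> = s * s * partial j (partial i f) (x + \<sigma> *\<^sub>R e + \<tau> *\<^sub>R d)"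
    using \<sigma>(3) \<tau>(3) translate by simp
  finally show ?thesis
    using \<sigma> \<tau> unfolding e_def d_def by blast
qed

lemma dist_axis_steps:
  fixes x :: pt
  shows "dist (x + a *\<^sub>R axis k 1 + b *\<^sub>R axis l 1) x \<le> \<bar>a\<bar> + \<bar>b\<bar>"
proof -
  have "dist (x + a *\<^sub>R axis k 1 + b *\<^sub>R axis l 1) x = norm (a *\<^sub>R axis k 1 + b *\<^sub>R axis l 1 :: pt)"
    by (simp add: dist_norm add.assoc)
  also have "\<dots> \<le> norm (a *\<^sub>R axis k 1 :: pt) + norm (b *\<^sub>R axis l 1 :: pt)"
    by (rule norm_triangle_ineq)
  finally show ?thesis
    by simp
qed

text \<open>Both mixed partials are values of one second difference quotient at nearby points.\<close>
lemma partial_commute: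
  fixes x :: pt
  assumes U: "open U" and f: "smooth_on U f" and x: "x \<in> U"
  shows "partial j (partial i f) x = partial i (partial j f) x"
proof (rule ccontr)
  define A where "A = partial j (partial i f)"
  define B where "B = partial i (partial j f)"
  assume "partial j (partial i f) x \<noteq> partial i (partial j f) x"
  then have \<epsilon>: "\<bar>A x - B x\<bar> / 2 > 0"
    unfolding A_def B_def by simp
  have "isCont A x" "isCont B x"
    unfolding A_def B_def using smooth_on_imp_continuous_on[OF smooth_on_partial[OF smooth_on_partial[OF f]]] U x
    by (simp_all add: continuous_on_eq_continuous_at)
  then obtain dA dB where dA: "dA > 0" "\<And>y. dist y x < dA \<Longrightarrow> dist (A y) (A x) < \<bar>A x - B x\<bar> / 2"
    and dB: "dB > 0" "\<And>y. dist y x < dB \<Longrightarrow> dist (B y) (B x) < \<bar>A x - B x\<bar> / 2"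
    using \<epsilon> unfolding continuous_at_eps_delta by metis
  obtain r where r: "r > 0" "ball x r \<subseteq> U"
    using U x openE by blast
  define s where "s = min (min dA dB) r / 3"
  have s: "s > 0" "2 * s < dA" "2 * s < dB" "2 * s < r"
    using dA dB r unfolding s_def by auto
  have near: "dist (x + a *\<^sub>R axis k 1 + b *\<^sub>R axis l 1) x \<le> 2 * s" if "\<bar>a\<bar> \<le> s" "\<bar>b\<bar> \<le> s" for a b k l
    using dist_axis_steps[of x a k b l] that by linarith
  have inU: "x + a *\<^sub>R axis k 1 + b *\<^sub>R axis l 1 \<in> U" if "\<bar>a\<bar> \<le> s" "\<bar>b\<bar> \<le> s" for a b k l
    using near[OF that, of k l] s r by (auto simp: dist_commute subset_iff)
  obtain \<sigma>1 \<tau>1 where 1: "0 < \<sigma>1" "\<sigma>1 < s" "0 < \<tau>1" "\<tau>1 < s"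
     "f (x + s *\<^sub>R axis i 1 + s *\<^sub>R axis j 1) - f (x + s *\<^sub>R axis i 1) - f (x + s *\<^sub>R axis j 1) + f x
       = s * s * A (x + \<sigma>1 *\<^sub>R axis i 1 + \<tau>1 *\<^sub>R axis j 1)"
    using second_difference_mean_value[OF U f s(1) inU] unfolding A_def by blast
  obtain \<sigma>2 \<tau>2 where 2: "0 < \<sigma>2" "\<sigma>2 < s" "0 < \<tau>2" "\<tau>2 < s"
     "f (x + s *\<^sub>R axis j 1 + s *\<^sub>R axis i 1) - f (x + s *\<^sub>R axis j 1) - f (x + s *\<^sub>R axis i 1) + f x
       = s * s * B (x + \<sigma>2 *\<^sub>R axis j 1 + \<tau>2 *\<^sub>R axis i 1)"
    using second_difference_mean_value[OF U f s(1) inU] unfolding B_def by blast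
  have "x + s *\<^sub>R axis j 1 + s *\<^sub>R axis i 1 = x + s *\<^sub>R axis i 1 + s *\<^sub>R axis j 1"
    by (simp add: algebra_simps)
  then have eq: "A (x + \<sigma>1 *\<^sub>R axis i 1 + \<tau>1 *\<^sub>R axis j 1) = B (x + \<sigma>2 *\<^sub>R axis j 1 + \<tau>2 *\<^sub>R axis i 1)"
    using 1(5) 2(5) s(1) by (simp add: algebra_simps)
  have "dist (A (x + \<sigma>1 *\<^sub>R axis i 1 + \<tau>1 *\<^sub>R axis j 1)) (A x) < \<bar>A x - B x\<bar> / 2"
    using near[of \<sigma>1 \<tau>1 i j] 1 s by (intro dA(2)) auto
  moreover have "dist (B (x + \<sigma>2 *\<^sub>R axis j 1 + \<tau>2 *\<^sub>R axis i 1)) (B x) < \<bar>A x - B x\<bar> / 2"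
    using near[of \<sigma>2 \<tau>2 j i] 2 s by (intro dB(2)) auto
  ultimately show False
    unfolding eq dist_real_def by (auto simp: abs_if split: if_splits)
qed

section \<open>Index calculus\<close>

lemma sum_swap_inner:
  "(\<Sum>a\<in>A. \<Sum>b\<in>B. \<Sum>c\<in>C. F a b c) = (\<Sum>a\<in>A. \<Sum>c\<in>C. \<Sum>b\<in>B. F a b c)"
  by (rule sum.cong[OF refl], rule sum.swap)

lemma sum_swap_inner2:
  "(\<Sum>a\<in>A. \<Sum>b\<in>B. \<Sum>c\<in>C. \<Sum>d\<in>D. F a b c d) = (\<Sum>a\<in>A. \<Sum>b\<in>B. \<Sum>d\<in>D. \<Sum>c\<in>C. F a b c d)"
  by (rule sum.cong[OF refl], rule sum_swap_inner)

lemma sum_rotate3: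
  "(\<Sum>a\<in>A. \<Sum>b\<in>B. \<Sum>c\<in>C. F a b c) = (\<Sum>b\<in>B. \<Sum>c\<in>C. \<Sum>a\<in>A. F a b c)"
  by (subst sum.swap) (rule sum_swap_inner)

lemma sum_rotate4:
  "(\<Sum>a\<in>A. \<Sum>b\<in>B. \<Sum>c\<in>C. \<Sum>d\<in>D. F a b c d) = (\<Sum>b\<in>B. \<Sum>c\<in>C. \<Sum>d\<in>D. \<Sum>a\<in>A. F a b c d)"
  by (subst sum.swap) (rule sum.cong[OF refl], rule sum_rotate3)

lemma sum_rotate5:
  "(\<Sum>a\<in>A. \<Sum>b\<in>B. \<Sum>c\<in>C. \<Sum>d\<in>D. \<Sum>e\<in>E. F a b c d e)
     = (\<Sum>b\<in>B. \<Sum>c\<in>C. \<Sum>d\<in>D. \<Sum>e\<in>E. \<Sum>a\<in>A. F a b c d e)"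
  by (subst sum.swap) (rule sum.cong[OF refl], rule sum_rotate4)

definition kronecker :: "'n \<Rightarrow> 'n \<Rightarrow> real" where
  "kronecker i j = (if i = j then 1 else 0)"

lemma kronecker_sum [simp]:
  fixes X :: "'n::finite \<Rightarrow> real"
  shows "(\<Sum>i\<in>UNIV. kronecker a i * X i) = X a" "(\<Sum>i\<in>UNIV. X i * kronecker a i) = X a"
    "(\<Sum>i\<in>UNIV. kronecker i a * X i) = X a" "(\<Sum>i\<in>UNIV. X i * kronecker i a) = X a"
  by (simp_all add: kronecker_def if_distrib if_distribR sum.delta sum.delta' cong: if_cong)

lemma kronecker_collapse3:
  fixes F :: "'n::finite \<Rightarrow> 'n \<Rightarrow> 'n \<Rightarrow> real"
  shows "(\<Sum>i1\<in>UNIV. \<Sum>i2\<in>UNIV. \<Sum>i3\<in>UNIV.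
      kronecker x i1 * kronecker y i2 * kronecker z i3 * F i1 i2 i3) = F x y z"
  by (simp add: mult.assoc sum_distrib_left[symmetric])

lemma axis_nth_kronecker: "axis i (1::real) $ j = kronecker i j"
  by (simp add: axis_def kronecker_def)

lemma matrix_mul_eq_mat_1_entry:
  fixes A B :: "real^'n^'n"
  assumes "A ** B = mat 1"
  shows "(\<Sum>j\<in>UNIV. A$i$j * B$j$l) = kronecker i l"
  using arg_cong[OF assms, of "\<lambda>M. M$i$l"] by (simp add: matrix_matrix_mult_def mat_def kronecker_def)

lemma matrix_mul_matrix_inv:
  fixes A :: "real^'n^'n"
  assumes "det A \<noteq> 0"
  shows "A ** matrix_inv A = mat 1" and "matrix_inv A ** A = mat 1"
proof -
  have "\<exists>A'. A ** A' = mat 1 \<and> A' ** A = mat 1"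
    using assms invertible_det_nz[of A] invertible_def by blast
  then have "A ** matrix_inv A = mat 1 \<and> matrix_inv A ** A = mat 1"
    unfolding matrix_inv_def by (rule someI_ex)
  then show "A ** matrix_inv A = mat 1" "matrix_inv A ** A = mat 1"
    by auto
qed

lemma matrix_inv_cramer:
  fixes A :: "real^'n^'n"
  assumes "det A \<noteq> 0"
  shows "matrix_inv A $ k $ l = det (\<chi> i j. if j = k then axis l 1 $ i else A $ i $ j) / det A"
proof -
  have "A *v (matrix_inv A *v axis l 1) = axis l 1"
    by (simp add: matrix_vector_mul_assoc matrix_mul_matrix_inv(1)[OF assms])
  then have "matrix_inv A *v axis l 1 = (\<chi> k. det (\<chi> i j. if j = k then axis l 1 $ i else A $ i $ j) / det A)"
    using cramer[OF assms] by blast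
  moreover have "(matrix_inv A *v axis l 1) $ k = matrix_inv A $ k $ l"
    by (simp add: matrix_vector_mult_def axis_nth_kronecker)
  ultimately show ?thesis
    by simp
qed

lemma matrix_inv_symmetric:
  fixes A :: "real^'n^'n"
  assumes "det A \<noteq> 0" and "transpose A = A"
  shows "matrix_inv A $ i $ j = matrix_inv A $ j $ i"
proof -
  define B where "B = matrix_inv A"
  have AB: "A ** B = mat 1"
    unfolding B_def by (rule matrix_mul_matrix_inv(1)[OF assms(1)])
  have "transpose B ** A = mat 1"
    using arg_cong[OF AB, of transpose] assms(2) by (simp add: matrix_transpose_mul transpose_mat)
  then have "transpose B = transpose B ** (A ** B)"
    by (simp add: AB)
  also have "\<dots> = B"
    by (simp add: matrix_mul_assoc \<open>transpose B ** A = mat 1\<close>)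
  finally have "transpose B = B" .
  from arg_cong[OF this, of "\<lambda>M. M $ j $ i"] show ?thesis
    by (simp add: transpose_def B_def)
qed

definition contract_ricci :: "real^'n^'n \<Rightarrow> ('n \<Rightarrow> 'n \<Rightarrow> 'n \<Rightarrow> 'n \<Rightarrow> real) \<Rightarrow> 'n \<Rightarrow> 'n \<Rightarrow> real" where
  "contract_ricci B R c d = (\<Sum>r\<in>UNIV. \<Sum>q\<in>UNIV. B$r$q * R q c r d)"

definition metric_trace :: "real^'n^'n \<Rightarrow> ('n \<Rightarrow> 'n \<Rightarrow> real) \<Rightarrow> real" where
  "metric_trace B T = (\<Sum>s\<in>UNIV. \<Sum>n\<in>UNIV. B$s$n * T s n)"

text \<open>With \<open>B = g\<inverse>\<close> this raises both indices of \<open>T\<close>, with \<open>B = g\<close> it lowers them.\<close>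
definition move_indices :: "real^'n^'n \<Rightarrow> ('n \<Rightarrow> 'n \<Rightarrow> real) \<Rightarrow> 'n \<Rightarrow> 'n \<Rightarrow> real" where
  "move_indices B T a b = (\<Sum>c\<in>UNIV. \<Sum>d\<in>UNIV. B$a$c * B$b$d * T c d)"

lemma move_indices_inverse:
  fixes G B :: "real^'n^'n"
  assumes "G ** B = mat 1"
  shows "move_indices G (move_indices B T) a b = T a b"
proof -
  have "move_indices G (move_indices B T) a b
      = (\<Sum>c\<in>UNIV. \<Sum>d\<in>UNIV. \<Sum>x\<in>UNIV. \<Sum>y\<in>UNIV. G$a$c * B$c$x * (G$b$d * B$d$y * T x y))"
    unfolding move_indices_def by (simp add: sum_distrib_left mult_ac)
  also have "\<dots> = (\<Sum>x\<in>UNIV. \<Sum>c\<in>UNIV. \<Sum>y\<in>UNIV. \<Sum>d\<in>UNIV. G$a$c * B$c$x * (G$b$d * B$d$y * T x y))"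
    by (subst sum_swap_inner, subst sum.swap, subst sum_swap_inner2) (rule refl)
  also have "\<dots> = (\<Sum>x\<in>UNIV. \<Sum>y\<in>UNIV. kronecker a x * (kronecker b y * T x y))"
    by (simp only: sum_distrib_left[symmetric] sum_distrib_right[symmetric]
        matrix_mul_eq_mat_1_entry[OF assms])
  also have "\<dots> = T a b"
    by (simp add: sum_distrib_left[symmetric])
  finally show ?thesis .
qed

lemma move_indices_metric:
  fixes G B :: "real^'n^'n"
  assumes "G ** B = mat 1" and B_sym: "\<And>i j. B$i$j = B$j$i"
  shows "move_indices B (\<lambda>c d. G$c$d) a b = B$a$b"
proof -
  have "move_indices B (\<lambda>c d. G$c$d) a b = (\<Sum>c\<in>UNIV. B$a$c * (\<Sum>d\<in>UNIV. G$c$d * B$d$b))"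
    unfolding move_indices_def by (simp add: sum_distrib_left mult_ac B_sym[of b])
  then show ?thesis
    by (simp add: matrix_mul_eq_mat_1_entry[OF assms(1)])
qed

section \<open>The Levi-Civita symbol and complementary minors\<close>

definition position4 :: "4 \<Rightarrow> real" where
  "position4 i = (if i = 1 then 1 else if i = 2 then 2 else if i = 3 then 3 else 4)"

text \<open>The product of the position differences is \<open>\<plusminus>12\<close> on permutations of \<open>1 2 3 4\<close>
  and vanishes as soon as an index repeats.\<close>
definition levi_civita :: "4 \<Rightarrow> 4 \<Rightarrow> 4 \<Rightarrow> 4 \<Rightarrow> real" where
  "levi_civita i j k l =
     (position4 j - position4 i) * (position4 k - position4 i) * (position4 l - position4 i)
     * (position4 k - position4 j) * (position4 l - position4 j) * (position4 l - position4 k) / 12"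

lemma levi_civita_repeated [simp]:
  "levi_civita i i k l = 0" "levi_civita i j i l = 0" "levi_civita i j k i = 0"
  "levi_civita i j j l = 0" "levi_civita i j k j = 0" "levi_civita i j k k = 0"
  by (simp_all add: levi_civita_def)

lemma levi_civita_permutation [simp]:
  "levi_civita 1 2 3 4 = 1" "levi_civita 1 2 4 3 = -1" "levi_civita 1 3 2 4 = -1"
  "levi_civita 1 3 4 2 = 1" "levi_civita 1 4 2 3 = 1" "levi_civita 1 4 3 2 = -1"
  "levi_civita 2 1 3 4 = -1" "levi_civita 2 1 4 3 = 1" "levi_civita 2 3 1 4 = 1"
  "levi_civita 2 3 4 1 = -1" "levi_civita 2 4 1 3 = -1" "levi_civita 2 4 3 1 = 1"
  "levi_civita 3 1 2 4 = 1" "levi_civita 3 1 4 2 = -1" "levi_civita 3 2 1 4 = -1"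
  "levi_civita 3 2 4 1 = 1" "levi_civita 3 4 1 2 = 1" "levi_civita 3 4 2 1 = -1"
  "levi_civita 4 1 2 3 = -1" "levi_civita 4 1 3 2 = 1" "levi_civita 4 2 1 3 = 1"
  "levi_civita 4 2 3 1 = -1" "levi_civita 4 3 1 2 = -1" "levi_civita 4 3 2 1 = 1"
  by (simp_all add: levi_civita_def position4_def)

lemma kronecker_4 [simp]:
  "kronecker i i = 1"
  "kronecker (1::4) 2 = 0" "kronecker (1::4) 3 = 0" "kronecker (1::4) 4 = 0"
  "kronecker (2::4) 1 = 0" "kronecker (2::4) 3 = 0" "kronecker (2::4) 4 = 0"
  "kronecker (3::4) 1 = 0" "kronecker (3::4) 2 = 0" "kronecker (3::4) 4 = 0"
  "kronecker (4::4) 1 = 0" "kronecker (4::4) 2 = 0" "kronecker (4::4) 3 = 0"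
  by (simp_all add: kronecker_def)

lemma levi_civita_contract:
  "(\<Sum>l\<in>UNIV. levi_civita a1 a2 a3 l * levi_civita i1 i2 i3 l) =
     kronecker a1 i1 * kronecker a2 i2 * kronecker a3 i3 - kronecker a1 i1 * kronecker a3 i2 * kronecker a2 i3
   - kronecker a2 i1 * kronecker a1 i2 * kronecker a3 i3 + kronecker a3 i1 * kronecker a1 i2 * kronecker a2 i3
   + kronecker a2 i1 * kronecker a3 i2 * kronecker a1 i3 - kronecker a3 i1 * kronecker a2 i2 * kronecker a1 i3"
proof -
  have "\<forall>a1 a2 a3 i1 i2 i3.
    (\<Sum>l\<in>UNIV. levi_civita a1 a2 a3 l * levi_civita i1 i2 i3 l) =
     kronecker a1 i1 * kronecker a2 i2 * kronecker a3 i3 - kronecker a1 i1 * kronecker a3 i2 * kronecker a2 i3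
   - kronecker a2 i1 * kronecker a1 i2 * kronecker a3 i3 + kronecker a3 i1 * kronecker a1 i2 * kronecker a2 i3
   + kronecker a2 i1 * kronecker a3 i2 * kronecker a1 i3 - kronecker a3 i1 * kronecker a2 i2 * kronecker a1 i3"
    unfolding forall_4 sum_4 by (simp only: levi_civita_repeated levi_civita_permutation kronecker_4) simp
  then show ?thesis by blast
qed

lemma det_4:
  "det (A::'a::comm_ring_1^4^4) =
    A$1$1 * A$2$2 * A$3$3 * A$4$4 - A$1$1 * A$2$2 * A$3$4 * A$4$3
  - A$1$1 * A$2$3 * A$3$2 * A$4$4 + A$1$1 * A$2$3 * A$3$4 * A$4$2
  + A$1$1 * A$2$4 * A$3$2 * A$4$3 - A$1$1 * A$2$4 * A$3$3 * A$4$2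
  - A$1$2 * A$2$1 * A$3$3 * A$4$4 + A$1$2 * A$2$1 * A$3$4 * A$4$3
  + A$1$2 * A$2$3 * A$3$1 * A$4$4 - A$1$2 * A$2$3 * A$3$4 * A$4$1
  - A$1$2 * A$2$4 * A$3$1 * A$4$3 + A$1$2 * A$2$4 * A$3$3 * A$4$1
  + A$1$3 * A$2$1 * A$3$2 * A$4$4 - A$1$3 * A$2$1 * A$3$4 * A$4$2
  - A$1$3 * A$2$2 * A$3$1 * A$4$4 + A$1$3 * A$2$2 * A$3$4 * A$4$1
  + A$1$3 * A$2$4 * A$3$1 * A$4$2 - A$1$3 * A$2$4 * A$3$2 * A$4$1
  - A$1$4 * A$2$1 * A$3$2 * A$4$3 + A$1$4 * A$2$1 * A$3$3 * A$4$2
  + A$1$4 * A$2$2 * A$3$1 * A$4$3 - A$1$4 * A$2$2 * A$3$3 * A$4$1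
  - A$1$4 * A$2$3 * A$3$1 * A$4$2 + A$1$4 * A$2$3 * A$3$2 * A$4$1"
proof -
  have f1: "finite {2::4, 3, 4}" "1 \<notin> {2::4, 3, 4}" by auto
  have f2: "finite {3::4, 4}" "2 \<notin> {3::4, 4}" by auto
  have f3: "finite {4::4}" "3 \<notin> {4::4}" by auto
  show ?thesis
    unfolding det_def UNIV_4
    unfolding sum_over_permutations_insert[OF f1] sum_over_permutations_insert[OF f2]
      sum_over_permutations_insert[OF f3] permutes_sing
    by (simp add: sign_swap_id permutation_swap_id permutation_compose sign_compose sign_id
        swap_id_eq algebra_simps)
qed

lemma levi_civita_det:
  fixes M :: "real^4^4"
  shows "(\<Sum>i1\<in>UNIV. \<Sum>i2\<in>UNIV. \<Sum>i3\<in>UNIV. \<Sum>i4\<in>UNIV.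
     levi_civita i1 i2 i3 i4 * (M$i1$j1 * M$i2$j2 * M$i3$j3 * M$i4$j4)) = det M * levi_civita j1 j2 j3 j4"
proof -
  have "\<forall>j1 j2 j3 j4. (\<Sum>i1\<in>UNIV. \<Sum>i2\<in>UNIV. \<Sum>i3\<in>UNIV. \<Sum>i4\<in>UNIV.
     levi_civita i1 i2 i3 i4 * (M$i1$j1 * M$i2$j2 * M$i3$j3 * M$i4$j4)) = det M * levi_civita j1 j2 j3 j4"
    unfolding sum_4 by (simp only: levi_civita_repeated levi_civita_permutation)
      (simp add: forall_4 det_4 algebra_simps)
  then show ?thesis by blast
qed

lemma levi_civita_contract_inverse:
  fixes G B :: "real^4^4"
  assumes "B ** G = mat 1"
  shows "(\<Sum>i1\<in>UNIV. \<Sum>i2\<in>UNIV. \<Sum>i3\<in>UNIV. levi_civita i1 i2 i3 l * (B$i1$j1 * B$i2$j2 * B$i3$j3))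
     = det B * (\<Sum>y\<in>UNIV. levi_civita j1 j2 j3 y * G$y$l)"
proof -
  have "det B * (\<Sum>y\<in>UNIV. levi_civita j1 j2 j3 y * G$y$l)
      = (\<Sum>j4\<in>UNIV. (det B * levi_civita j1 j2 j3 j4) * G$j4$l)"
    by (simp add: sum_distrib_left mult.assoc)
  also have "\<dots> = (\<Sum>j4\<in>UNIV. \<Sum>i1\<in>UNIV. \<Sum>i2\<in>UNIV. \<Sum>i3\<in>UNIV. \<Sum>i4\<in>UNIV.
      levi_civita i1 i2 i3 i4 * (B$i1$j1 * B$i2$j2 * B$i3$j3) * (B$i4$j4 * G$j4$l))"
    by (simp only: levi_civita_det[symmetric] sum_distrib_right) (simp add: mult.assoc)
  also have "\<dots> = (\<Sum>i1\<in>UNIV. \<Sum>i2\<in>UNIV. \<Sum>i3\<in>UNIV. \<Sum>i4\<in>UNIV. \<Sum>j4\<in>UNIV.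
      levi_civita i1 i2 i3 i4 * (B$i1$j1 * B$i2$j2 * B$i3$j3) * (B$i4$j4 * G$j4$l))"
    by (rule sum_rotate5)
  also have "\<dots> = (\<Sum>i1\<in>UNIV. \<Sum>i2\<in>UNIV. \<Sum>i3\<in>UNIV. \<Sum>i4\<in>UNIV.
      levi_civita i1 i2 i3 i4 * (B$i1$j1 * B$i2$j2 * B$i3$j3) * kronecker i4 l)"
    by (simp add: sum_distrib_left[symmetric] matrix_mul_eq_mat_1_entry[OF assms])
  finally show ?thesis by simp
qed

definition minor3 :: "real^4^4 \<Rightarrow> 4 \<Rightarrow> 4 \<Rightarrow> 4 \<Rightarrow> 4 \<Rightarrow> 4 \<Rightarrow> 4 \<Rightarrow> real" where
  "minor3 B a1 a2 a3 j1 j2 j3 =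
       B$a1$j1 * (B$a2$j2 * B$a3$j3 - B$a2$j3 * B$a3$j2)
     - B$a1$j2 * (B$a2$j1 * B$a3$j3 - B$a2$j3 * B$a3$j1)
     + B$a1$j3 * (B$a2$j1 * B$a3$j2 - B$a2$j2 * B$a3$j1)"

text \<open>The double contraction picks out, with a sign, the entry of \<open>G\<close> whose row and column
  indices complete \<open>j1 j2 j3\<close> and \<open>a1 a2 a3\<close> to \<open>{1, 2, 3, 4}\<close>.\<close>
definition complementary_entry :: "real^4^4 \<Rightarrow> 4 \<Rightarrow> 4 \<Rightarrow> 4 \<Rightarrow> 4 \<Rightarrow> 4 \<Rightarrow> 4 \<Rightarrow> real" where
  "complementary_entry G a1 a2 a3 j1 j2 j3 =
     (\<Sum>l\<in>UNIV. \<Sum>y\<in>UNIV. levi_civita a1 a2 a3 l * levi_civita j1 j2 j3 y * G$y$l)"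

lemma jacobi_complementary_minor:
  fixes G B :: "real^4^4"
  assumes BG: "B ** G = mat 1"
  shows "complementary_entry G a1 a2 a3 j1 j2 j3 = det G * minor3 B a1 a2 a3 j1 j2 j3"
proof -
  have det_BG: "det B * det G = 1"
    using arg_cong[OF BG, of det] by (simp add: det_mul)
  have row: "(\<Sum>y\<in>UNIV. levi_civita j1 j2 j3 y * G$y$l)
      = det G * (\<Sum>i1\<in>UNIV. \<Sum>i2\<in>UNIV. \<Sum>i3\<in>UNIV. levi_civita i1 i2 i3 l * (B$i1$j1 * B$i2$j2 * B$i3$j3))"
    for l
    unfolding levi_civita_contract_inverse[OF BG] using det_BG by (simp add: algebra_simps)
  have "complementary_entry G a1 a2 a3 j1 j2 j3
      = (\<Sum>l\<in>UNIV. levi_civita a1 a2 a3 l * (\<Sum>y\<in>UNIV. levi_civita j1 j2 j3 y * G$y$l))"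
    unfolding complementary_entry_def by (simp add: sum_distrib_left mult.assoc)
  also have "\<dots> = det G * (\<Sum>l\<in>UNIV. \<Sum>i1\<in>UNIV. \<Sum>i2\<in>UNIV. \<Sum>i3\<in>UNIV.
      levi_civita a1 a2 a3 l * levi_civita i1 i2 i3 l * (B$i1$j1 * B$i2$j2 * B$i3$j3))"
    unfolding row by (simp add: sum_distrib_left mult_ac)
  also have "\<dots> = det G * (\<Sum>i1\<in>UNIV. \<Sum>i2\<in>UNIV. \<Sum>i3\<in>UNIV.
      (\<Sum>l\<in>UNIV. levi_civita a1 a2 a3 l * levi_civita i1 i2 i3 l) * (B$i1$j1 * B$i2$j2 * B$i3$j3))"
    by (subst sum_rotate4) (simp add: sum_distrib_right)
  also have "\<dots> = det G * minor3 B a1 a2 a3 j1 j2 j3"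
    unfolding levi_civita_contract
    by (simp only: left_diff_distrib distrib_right sum.distrib sum_subtractf kronecker_collapse3)
      (simp add: minor3_def algebra_simps)
  finally show ?thesis .
qed

section \<open>The Einstein density as a polynomial in the curvature\<close>

text \<open>After relabelling summation indices and using the antisymmetries of \<open>R\<close>, each of the six
  terms of the minor is \<open>\<plusminus>B\<^sub>a\<^sub>b\<close> times the scalar curvature or \<open>\<plusminus>\<close> the raised Ricci tensor.\<close>
lemma contract_minor3:
  fixes B :: "real^4^4" and R :: "4 \<Rightarrow> 4 \<Rightarrow> 4 \<Rightarrow> 4 \<Rightarrow> real"
  assumes R12: "\<And>q c r d. R c q r d = - R q c r d" and R34: "\<And>q c r d. R q c d r = - R q c r d"
    and B_sym: "\<And>i j. B$i$j = B$j$i"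
  shows "(\<Sum>q\<in>UNIV. \<Sum>c\<in>UNIV. \<Sum>r\<in>UNIV. \<Sum>d\<in>UNIV. R q c r d * minor3 B a r d b q c)
       = 2 * B$a$b * metric_trace B (contract_ricci B R) - 4 * move_indices B (contract_ricci B R) a b"
    (is "?S (\<lambda>q c r d. R q c r d * minor3 B a r d b q c) = _")
proof -
  define sc where "sc = metric_trace B (contract_ricci B R)"
  define ric where "ric = move_indices B (contract_ricci B R) a b"
  have reorder: "?S F = (\<Sum>c\<in>UNIV. \<Sum>d\<in>UNIV. \<Sum>r\<in>UNIV. \<Sum>q\<in>UNIV. F q c r d)" for F
    by (subst sum_rotate4) (rule sum_swap_inner)
  have swap_qc: "?S F = ?S (\<lambda>q c r d. F c q r d)" for F
    by (rule sum.swap)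
  have swap_rd: "?S F = ?S (\<lambda>q c r d. F q c d r)" for F
    by (rule sum_swap_inner2)
  have T1: "?S (\<lambda>q c r d. B$a$b * (B$r$q * B$d$c) * R q c r d) = B$a$b * sc"
    by (subst reorder)
      (simp add: sc_def metric_trace_def contract_ricci_def sum_distrib_left mult_ac B_sym[of _ c for c])
  have T6: "?S (\<lambda>q c r d. B$a$c * B$r$q * B$d$b * R q c r d) = ric"
    by (subst reorder)
      (simp add: ric_def move_indices_def contract_ricci_def sum_distrib_left mult_ac B_sym[of _ b])
  have T2: "?S (\<lambda>q c r d. B$a$b * (B$r$c * B$d$q) * R q c r d) = - (B$a$b * sc)"
    by (subst swap_qc, subst R12) (simp add: T1[symmetric] sum_negf)
  have T3: "?S (\<lambda>q c r d. B$a$q * B$r$b * B$d$c * R q c r d) = ric"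
    by (subst swap_qc, subst swap_rd, subst R12, subst R34) (simp add: T6[symmetric] mult_ac)
  have T4: "?S (\<lambda>q c r d. B$a$q * B$r$c * B$d$b * R q c r d) = - ric"
    by (subst swap_qc, subst R12) (simp add: T6[symmetric] sum_negf mult_ac)
  have T5: "?S (\<lambda>q c r d. B$a$c * B$r$b * B$d$q * R q c r d) = - ric"
    by (subst swap_rd, subst R34) (simp add: T6[symmetric] sum_negf mult_ac)
  have split: "R q c r d * minor3 B a r d b q c =
       B$a$b * (B$r$q * B$d$c) * R q c r d - B$a$b * (B$r$c * B$d$q) * R q c r d
     - B$a$q * B$r$b * B$d$c * R q c r d + B$a$q * B$r$c * B$d$b * R q c r d
     + B$a$c * B$r$b * B$d$q * R q c r d - B$a$c * B$r$q * B$d$b * R q c r d" for q c r d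
    unfolding minor3_def by (simp add: algebra_simps)
  show ?thesis
    unfolding split sc_def[symmetric] ric_def[symmetric]
    by (simp only: sum.distrib sum_subtractf T1 T2 T3 T4 T5 T6)
qed

lemma einstein_density_levi_civita:
  fixes G B :: "real^4^4" and R :: "4 \<Rightarrow> 4 \<Rightarrow> 4 \<Rightarrow> 4 \<Rightarrow> real"
  assumes BG: "B ** G = mat 1"
    and R12: "\<And>q c r d. R c q r d = - R q c r d" and R34: "\<And>q c r d. R q c d r = - R q c r d"
    and B_sym: "\<And>i j. B$i$j = B$j$i"
  shows "det G * move_indices B
           (\<lambda>c d. contract_ricci B R c d - 1/2 * metric_trace B (contract_ricci B R) * G$c$d) a b
       = - 1/4 * (\<Sum>q\<in>UNIV. \<Sum>c\<in>UNIV. \<Sum>r\<in>UNIV. \<Sum>d\<in>UNIV. R q c r d * complementary_entry G a r d b q c)"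
proof -
  have GB: "G ** B = mat 1"
    using BG matrix_left_right_inverse by blast
  have "move_indices B
          (\<lambda>c d. contract_ricci B R c d - 1/2 * metric_trace B (contract_ricci B R) * G$c$d) a b
      = move_indices B (contract_ricci B R) a b
          - 1/2 * metric_trace B (contract_ricci B R) * move_indices B (\<lambda>c d. G$c$d) a b"
    unfolding move_indices_def by (simp add: right_diff_distrib sum_subtractf sum_distrib_left mult_ac)
  also have "\<dots> = move_indices B (contract_ricci B R) a b - 1/2 * metric_trace B (contract_ricci B R) * B$a$b"
    by (simp only: move_indices_metric[OF GB B_sym])
  finally have raised: "move_indices B
          (\<lambda>c d. contract_ricci B R c d - 1/2 * metric_trace B (contract_ricci B R) * G$c$d) a b
      = move_indices B (contract_ricci B R) a b - 1/2 * metric_trace B (contract_ricci B R) * B$a$b" .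
  have "(\<Sum>q\<in>UNIV. \<Sum>c\<in>UNIV. \<Sum>r\<in>UNIV. \<Sum>d\<in>UNIV. R q c r d * complementary_entry G a r d b q c)
      = det G * (\<Sum>q\<in>UNIV. \<Sum>c\<in>UNIV. \<Sum>r\<in>UNIV. \<Sum>d\<in>UNIV. R q c r d * minor3 B a r d b q c)"
    by (simp add: jacobi_complementary_minor[OF BG] sum_distrib_left mult_ac)
  then show ?thesis
    unfolding raised contract_minor3[OF R12 R34 B_sym] by (simp add: algebra_simps)
qed

section \<open>Curvature of a singular semi-Riemannian chart\<close>

lemma gval_axis: "gval g q (axis j 1) (axis l 1) = g q $ j $ l"
  by (simp add: gval_def axis_nth_kronecker mult_ac flip: sum_distrib_left)

lemma gval_zero: "gval g p u 0 = 0"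
  by (simp add: gval_def)

lemma dir_coord_field: "dir (coord_field i) f p = partial i f p"
  by (simp add: dir_def coord_field_def axis_nth_kronecker)

lemma lie_coord_field: "lie (coord_field i) (coord_field j) p = 0"
  unfolding lie_def dir_def by (simp add: coord_field_def vec_eq_iff)

definition christoffel_first :: "metric \<Rightarrow> 4 \<Rightarrow> 4 \<Rightarrow> 4 \<Rightarrow> pt \<Rightarrow> real" where
  "christoffel_first g i j l p = 1/2 * (partial i (\<lambda>q. g q $ j $ l) p + partial j (\<lambda>q. g q $ l $ i) p
     - partial l (\<lambda>q. g q $ i $ j) p)"

lemma nabla_flat_coord_field:
  "nabla_flat g (coord_field i) (coord_field j) p $ l = christoffel_first g i j l p"
  unfolding nabla_flat_def koszul_def dir_coord_field lie_coord_field gval_zero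
  by (simp add: christoffel_first_def coord_field_def gval_axis)

lemma smooth_field_coord_field: "smooth_field U (coord_field i)"
  unfolding smooth_field_def coord_field_def by (simp add: smooth_on_const)

definition christoffel_product :: "metric \<Rightarrow> 4 \<Rightarrow> 4 \<Rightarrow> 4 \<Rightarrow> 4 \<Rightarrow> pt \<Rightarrow> real" where
  "christoffel_product g c j a b p =
     (\<Sum>u\<in>UNIV. \<Sum>v\<in>UNIV. ginv g p $ u $ v * christoffel_first g c j u p * christoffel_first g a b v p)"

text \<open>\<open>R\<^sub>q\<^sub>s\<^sub>m\<^sub>n = (\<nabla>\<^sub>m \<nabla>\<^sup>\<flat>\<^sub>n \<partial>\<^sub>s)(\<partial>\<^sub>q) - (\<nabla>\<^sub>n \<nabla>\<^sup>\<flat>\<^sub>m \<partial>\<^sub>s)(\<partial>\<^sub>q)\<close> is the paper's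
  \<open>R(X, Y, Z, T)\<close> on coordinate fields, whose brackets vanish.  Where \<open>g\<close> is nondegenerate,
  \<open>g\<^sup>r\<^sup>q R\<^sub>q\<^sub>s\<^sub>m\<^sub>n\<close> is the usual Riemann tensor \<open>R\<^sup>r\<^sub>s\<^sub>m\<^sub>n\<close>.\<close>
definition riemann_lowered :: "metric \<Rightarrow> pt \<Rightarrow> 4 \<Rightarrow> 4 \<Rightarrow> 4 \<Rightarrow> 4 \<Rightarrow> real" where
  "riemann_lowered g p q s m n =
       cov_deriv g (coord_field m) (nabla_flat g (coord_field n) (coord_field s)) p $ q
     - cov_deriv g (coord_field n) (nabla_flat g (coord_field m) (coord_field s)) p $ q"

lemma riemann_lowered_antisym34: "riemann_lowered g p q s n m = - riemann_lowered g p q s m n"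
  unfolding riemann_lowered_def by simp

lemma smooth_on_riemann_lowered:
  assumes "open U" "semi_regular g U"
  shows "smooth_on U (\<lambda>p. riemann_lowered g p q s m n)"
proof -
  have "smooth_on U (\<lambda>p. cov_deriv g (coord_field c) (nabla_flat g (coord_field a) (coord_field b)) p $ j)"
    for a b c j
    using assms(2) smooth_field_coord_field
    unfolding semi_regular_def in_Abullet_def smooth_field_def by blast
  then show ?thesis
    unfolding riemann_lowered_def by (intro smooth_on_diff assms(1))
qed

locale singular_chart =
  fixes g :: metric and U :: "pt set"
  assumes singular_semi_riemannian: "singular_semi_riemannian g U"
begin

lemma open_chart: "open U"
  using singular_semi_riemannian unfolding singular_semi_riemannian_def by blast

lemma smooth_on_metric: "smooth_on U (\<lambda>p. g p $ a $ b)"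
  using singular_semi_riemannian unfolding singular_semi_riemannian_def by blast

lemma metric_sym: "p \<in> U \<Longrightarrow> g p $ a $ b = g p $ b $ a"
  using singular_semi_riemannian unfolding singular_semi_riemannian_def by blast

lemma partial_differentiable_metric: "p \<in> U \<Longrightarrow> partial_differentiable (\<lambda>q. g q $ a $ b) p m"
  using smooth_on_partial_differentiable[OF smooth_on_metric] .

lemma partial_metric_sym: "p \<in> U \<Longrightarrow> partial m (\<lambda>q. g q $ a $ b) p = partial m (\<lambda>q. g q $ b $ a) p"
  by (rule partial_cong[OF open_chart]) (use metric_sym in blast)+

lemma transpose_metric: "p \<in> U \<Longrightarrow> transpose (g p) = g p"
  unfolding transpose_def vec_eq_iff using metric_sym by simp

definition regular_points :: "pt set" where
  "regular_points = {p \<in> U. det (g p) \<noteq> 0}"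

lemma regular_points_in_chart: "p \<in> regular_points \<Longrightarrow> p \<in> U"
  and det_nonzero: "p \<in> regular_points \<Longrightarrow> det (g p) \<noteq> 0"
  unfolding regular_points_def by auto

lemma open_regular_points: "open regular_points"
proof -
  have "continuous_on U (\<lambda>p. det (g p))"
    by (rule smooth_on_imp_continuous_on[OF smooth_on_det[OF open_chart smooth_on_metric]])
  then have "open (U \<inter> (\<lambda>p. det (g p)) -` (- {0}))"
    by (intro continuous_open_preimage open_chart) auto
  moreover have "U \<inter> (\<lambda>p. det (g p)) -` (- {0}) = regular_points"
    unfolding regular_points_def by auto
  ultimately show ?thesis
    by simp
qed

lemma metric_mul_ginv: "p \<in> regular_points \<Longrightarrow> g p ** ginv g p = mat 1"
  and ginv_mul_metric: "p \<in> regular_points \<Longrightarrow> ginv g p ** g p = mat 1"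
  unfolding ginv_def using matrix_mul_matrix_inv det_nonzero by blast+

lemma ginv_sym: "p \<in> regular_points \<Longrightarrow> ginv g p $ i $ j = ginv g p $ j $ i"
  unfolding ginv_def
  by (rule matrix_inv_symmetric[OF det_nonzero transpose_metric[OF regular_points_in_chart]])

lemma partial_differentiable_ginv:
  assumes p: "p \<in> regular_points"
  shows "partial_differentiable (\<lambda>q. ginv g q $ k $ l) p m"
proof -
  define cofactor where "cofactor q = det (\<chi> i j. if j = k then axis l 1 $ i else g q $ i $ j)" for q
  have "smooth_on U cofactor"
    unfolding cofactor_def
  proof (intro smooth_on_det open_chart)
    fix i j
    show "smooth_on U (\<lambda>q. (\<chi> i j. if j = k then axis l 1 $ i else g q $ i $ j) $ i $ j)"
      by (cases "j = k") (simp_all add: smooth_on_const smooth_on_metric)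
  qed
  then have quotient: "partial_differentiable (\<lambda>q. cofactor q / det (g q)) p m"
    using smooth_on_partial_differentiable smooth_on_det[OF open_chart smooth_on_metric]
      regular_points_in_chart[OF p] det_nonzero[OF p]
    unfolding partial_differentiable_def by (intro differentiable_divide) auto
  have "\<forall>q\<in>regular_points. ginv g q $ k $ l = cofactor q / det (g q)"
    unfolding ginv_def cofactor_def by (simp add: matrix_inv_cramer det_nonzero)
  from partial_differentiable_cong[OF open_regular_points p this] quotient show ?thesis
    by simp
qed

lemma partial_ginv:
  assumes p: "p \<in> regular_points"
  shows "partial m (\<lambda>q. ginv g q $ r $ l) p =
    - (\<Sum>i\<in>UNIV. \<Sum>k\<in>UNIV. ginv g p $ r $ i * partial m (\<lambda>q. g q $ i $ k) p * ginv g p $ k $ l)"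
proof -
  have pU: "p \<in> U"
    by (rule regular_points_in_chart[OF p])
  define dB where "dB k = partial m (\<lambda>q. ginv g q $ k $ l) p" for k
  have "partial m (\<lambda>q. \<Sum>k\<in>UNIV. g q $ i $ k * ginv g q $ k $ l) p = partial m (\<lambda>q. kronecker i l) p" for i
    using metric_mul_ginv by (intro partial_cong[OF open_regular_points p]) (simp add: matrix_mul_eq_mat_1_entry)
  then have "(\<Sum>k\<in>UNIV. partial m (\<lambda>q. g q $ i $ k) p * ginv g p $ k $ l + g p $ i $ k * dB k) = 0" for i
    unfolding dB_def
    by (simp add: partial_sum partial_mult partial_differentiable_mult partial_differentiable_metric[OF pU]
        partial_differentiable_ginv[OF p])
  then have product_rule: "(\<Sum>k\<in>UNIV. g p $ i $ k * dB k)
      = - (\<Sum>k\<in>UNIV. partial m (\<lambda>q. g q $ i $ k) p * ginv g p $ k $ l)" for i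
    by (simp add: sum.distrib eq_neg_iff_add_eq_0 add.commute)
  have "dB r = (\<Sum>k\<in>UNIV. \<Sum>i\<in>UNIV. ginv g p $ r $ i * g p $ i $ k * dB k)"
    by (simp add: matrix_mul_eq_mat_1_entry[OF ginv_mul_metric[OF p]] flip: sum_distrib_right)
  also have "\<dots> = (\<Sum>i\<in>UNIV. ginv g p $ r $ i * (\<Sum>k\<in>UNIV. g p $ i $ k * dB k))"
    by (subst sum.swap) (simp add: sum_distrib_left mult.assoc)
  finally show ?thesis
    unfolding dB_def[symmetric] product_rule by (simp add: sum_distrib_left sum_negf mult.assoc)
qed

lemma smooth_on_christoffel_first: "smooth_on U (christoffel_first g i j l)"
  unfolding christoffel_first_def[abs_def]
  by (intro smooth_on_mult smooth_on_const smooth_on_add smooth_on_diff smooth_on_partial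
      smooth_on_metric open_chart)

lemma christoffel_first_sym_sum:
  "p \<in> U \<Longrightarrow> christoffel_first g n s q p + christoffel_first g n q s p = partial n (\<lambda>x. g x $ s $ q) p"
  unfolding christoffel_first_def using partial_metric_sym by (simp add: algebra_simps)

lemma christoffel_eq:
  "p \<in> U \<Longrightarrow> christoffel g p k i j = (\<Sum>l\<in>UNIV. ginv g p $ k $ l * christoffel_first g i j l p)"
  unfolding christoffel_def christoffel_first_def
  using partial_metric_sym[of p j _ i] by (simp add: sum_distrib_left mult_ac)

lemma partial_differentiable_christoffel_first: "p \<in> U \<Longrightarrow> partial_differentiable (christoffel_first g i j l) p m"
  by (rule smooth_on_partial_differentiable[OF smooth_on_christoffel_first])

lemma partial_christoffel:
  assumes p: "p \<in> regular_points"
  shows "partial m (\<lambda>q. christoffel g q r n s) p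
     = (\<Sum>l\<in>UNIV. ginv g p $ r $ l * partial m (christoffel_first g n s l) p)
       - (\<Sum>q\<in>UNIV. ginv g p $ r $ q * christoffel_product g m q n s p)
       - (\<Sum>l\<in>UNIV. christoffel g p r m l * christoffel g p l n s)"
proof -
  have pU: "p \<in> U"
    by (rule regular_points_in_chart[OF p])
  define B where "B = ginv g p"
  define K where "K i j l = christoffel_first g i j l p" for i j l
  have "partial m (\<lambda>q. christoffel g q r n s) p
      = partial m (\<lambda>q. \<Sum>l\<in>UNIV. ginv g q $ r $ l * christoffel_first g n s l q) p"
    using christoffel_eq regular_points_in_chart by (intro partial_cong[OF open_regular_points p]) simp
  also have "\<dots> = (\<Sum>l\<in>UNIV. partial m (\<lambda>q. ginv g q $ r $ l) p * K n s l
      + B$r$l * partial m (christoffel_first g n s l) p)"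
    unfolding B_def K_def
    by (simp add: partial_sum partial_mult partial_differentiable_mult partial_differentiable_ginv[OF p]
        partial_differentiable_christoffel_first[OF pU])
  also have "\<dots> = (\<Sum>l\<in>UNIV. B$r$l * partial m (christoffel_first g n s l) p)
      - (\<Sum>l\<in>UNIV. \<Sum>i\<in>UNIV. \<Sum>k\<in>UNIV. B$r$i * K m i k * B$k$l * K n s l)
      - (\<Sum>l\<in>UNIV. \<Sum>i\<in>UNIV. \<Sum>k\<in>UNIV. B$r$i * K m k i * B$k$l * K n s l)"
    unfolding partial_ginv[OF p] christoffel_first_sym_sum[OF pU, symmetric] B_def[symmetric] K_def
    by (simp add: sum.distrib sum_subtractf sum_distrib_right sum_distrib_left algebra_simps sum_negf)
  also have "(\<Sum>l\<in>UNIV. \<Sum>i\<in>UNIV. \<Sum>k\<in>UNIV. B$r$i * K m i k * B$k$l * K n s l)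
      = (\<Sum>q\<in>UNIV. B$r$q * christoffel_product g m q n s p)"
    unfolding christoffel_product_def B_def[symmetric] K_def[symmetric]
    by (subst sum_rotate3) (simp add: sum_distrib_left mult_ac)
  also have "(\<Sum>l\<in>UNIV. \<Sum>i\<in>UNIV. \<Sum>k\<in>UNIV. B$r$i * K m k i * B$k$l * K n s l)
      = (\<Sum>k\<in>UNIV. \<Sum>l\<in>UNIV. \<Sum>i\<in>UNIV. B$r$i * K m k i * B$k$l * K n s l)"
    by (rule trans[OF sum_rotate3 sum_rotate3])
  also have "\<dots> = (\<Sum>k\<in>UNIV. christoffel g p r m k * christoffel g p k n s)"
    unfolding christoffel_eq[OF pU] B_def K_def by (simp add: sum_distrib_left sum_distrib_right mult_ac)
  finally show ?thesis
    unfolding B_def K_def .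
qed

lemma flat_eq: "p \<in> U \<Longrightarrow> flat g p u = g p *v u"
  unfolding flat_def matrix_vector_mult_def using metric_sym by (simp add: vec_eq_iff mult.commute)

lemma innerb_regular:
  assumes p: "p \<in> regular_points"
  shows "innerb g p \<alpha> \<beta> = (\<Sum>u\<in>UNIV. \<Sum>v\<in>UNIV. ginv g p $ u $ v * \<alpha> $ u * \<beta> $ v)"
proof -
  have pU: "p \<in> U"
    by (rule regular_points_in_chart[OF p])
  have solvable: "\<exists>u. flat g p u = \<gamma>" for \<gamma>
    using metric_mul_ginv[OF p] by (intro exI[of _ "ginv g p *v \<gamma>"]) (simp add: flat_eq[OF pU] matrix_vector_mul_assoc)
  define u where "u = (SOME u. flat g p u = \<alpha>)"
  define v where "v = (SOME v. flat g p v = \<beta>)"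
  have u: "flat g p u = \<alpha>" and "g p *v v = \<beta>"
    using someI_ex[OF solvable] unfolding u_def v_def flat_eq[OF pU] by blast+
  then have v: "v = ginv g p *v \<beta>"
    using ginv_mul_metric[OF p] by (metis matrix_vector_mul_assoc matrix_vector_mul_lid)
  have "innerb g p \<alpha> \<beta> = (\<Sum>b\<in>UNIV. (\<Sum>a\<in>UNIV. u $ a * g p $ a $ b) * v $ b)"
    unfolding innerb_def gval_def u_def[symmetric] v_def[symmetric]
    by (subst sum.swap) (simp add: sum_distrib_left sum_distrib_right mult_ac)
  also have "\<dots> = (\<Sum>b\<in>UNIV. \<alpha> $ b * v $ b)"
    using u by (simp add: flat_def vec_eq_iff)
  also have "\<dots> = (\<Sum>u\<in>UNIV. \<Sum>v\<in>UNIV. ginv g p $ u $ v * \<alpha> $ u * \<beta> $ v)"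
    unfolding v by (simp add: matrix_vector_mult_def sum_distrib_left mult_ac)
  finally show ?thesis .
qed

lemma cov_deriv_coord_field:
  "p \<in> regular_points \<Longrightarrow>
     cov_deriv g (coord_field c) (nabla_flat g (coord_field a) (coord_field b)) p $ j
       = partial c (christoffel_first g a b j) p - christoffel_product g c j a b p"
  unfolding cov_deriv_def christoffel_product_def
  by (simp add: dir_coord_field nabla_flat_coord_field innerb_regular)

lemma riemann_ginv_riemann_lowered:
  assumes p: "p \<in> regular_points"
  shows "riemann g p r s m n = (\<Sum>q\<in>UNIV. ginv g p $ r $ q * riemann_lowered g p q s m n)"
proof -
  have half: "partial m (\<lambda>q. christoffel g q r n s) p + (\<Sum>l\<in>UNIV. christoffel g p r m l * christoffel g p l n s)
      = (\<Sum>q\<in>UNIV. ginv g p $ r $ q *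
           cov_deriv g (coord_field m) (nabla_flat g (coord_field n) (coord_field s)) p $ q)" for m n
    unfolding partial_christoffel[OF p] cov_deriv_coord_field[OF p]
    by (simp add: right_diff_distrib sum_subtractf)
  have "riemann g p r s m n
      = (partial m (\<lambda>q. christoffel g q r n s) p + (\<Sum>l\<in>UNIV. christoffel g p r m l * christoffel g p l n s))
      - (partial n (\<lambda>q. christoffel g q r m s) p + (\<Sum>l\<in>UNIV. christoffel g p r n l * christoffel g p l m s))"
    unfolding riemann_def by (simp add: sum_subtractf algebra_simps)
  then show ?thesis
    unfolding half riemann_lowered_def by (simp add: right_diff_distrib sum_subtractf)
qed

lemma christoffel_product_swap:
  "p \<in> regular_points \<Longrightarrow> christoffel_product g c j a b p = christoffel_product g a b c j p"
  unfolding christoffel_product_def by (subst sum.swap) (simp add: ginv_sym mult_ac)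

lemma partial_christoffel_first_sym_sum:
  assumes pU: "p \<in> U"
  shows "partial m (christoffel_first g n s q) p + partial m (christoffel_first g n q s) p
       = partial m (partial n (\<lambda>x. g x $ s $ q)) p"
proof -
  have "partial m (christoffel_first g n s q) p + partial m (christoffel_first g n q s) p
      = partial m (\<lambda>x. christoffel_first g n s q x + christoffel_first g n q s x) p"
    by (simp add: partial_add partial_differentiable_christoffel_first[OF pU])
  also have "\<dots> = partial m (partial n (\<lambda>x. g x $ s $ q)) p"
    using christoffel_first_sym_sum by (intro partial_cong[OF open_chart pU]) simp
  finally show ?thesis .
qed

lemma riemann_lowered_antisym12:
  assumes p: "p \<in> regular_points"
  shows "riemann_lowered g p s q m n = - riemann_lowered g p q s m n"
proof -
  have pU: "p \<in> U"
    by (rule regular_points_in_chart[OF p])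
  have "riemann_lowered g p q s m n + riemann_lowered g p s q m n
      = (partial m (christoffel_first g n s q) p + partial m (christoffel_first g n q s) p)
      - (partial n (christoffel_first g m s q) p + partial n (christoffel_first g m q s) p)
      - (christoffel_product g m q n s p - christoffel_product g n s m q p)
      - (christoffel_product g m s n q p - christoffel_product g n q m s p)"
    unfolding riemann_lowered_def cov_deriv_coord_field[OF p] by (simp add: algebra_simps)
  also have "\<dots> = 0"
    unfolding partial_christoffel_first_sym_sum[OF pU] christoffel_product_swap[OF p, of n s]
      christoffel_product_swap[OF p, of n q]
    using partial_commute[OF open_chart smooth_on_metric pU] by simp
  finally show ?thesis
    by simp
qed

end

definition einstein_up_density :: "metric \<Rightarrow> pt \<Rightarrow> 4 \<Rightarrow> 4 \<Rightarrow> real" where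
  "einstein_up_density g p a b = - 1/4 *
     (\<Sum>q\<in>UNIV. \<Sum>c\<in>UNIV. \<Sum>r\<in>UNIV. \<Sum>d\<in>UNIV.
        riemann_lowered g p q c r d * complementary_entry (g p) a r d b q c)"

definition einstein_density :: "metric \<Rightarrow> pt \<Rightarrow> 4 \<Rightarrow> 4 \<Rightarrow> real" where
  "einstein_density g p = move_indices (g p) (einstein_up_density g p)"

lemma smooth_on_einstein_up_density:
  assumes "singular_semi_riemannian g U" "semi_regular g U"
  shows "smooth_on U (\<lambda>p. einstein_up_density g p a b)"
proof -
  interpret singular_chart g U
    using assms(1) by unfold_locales
  show ?thesis
    unfolding einstein_up_density_def complementary_entry_def
    by (intro smooth_on_mult smooth_on_sum smooth_on_const smooth_on_metric
        smooth_on_riemann_lowered[OF open_chart assms(2)] open_chart)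
qed

lemma smooth_on_einstein_density:
  assumes "singular_semi_riemannian g U" "semi_regular g U"
  shows "smooth_on U (\<lambda>p. einstein_density g p a b)"
proof -
  interpret singular_chart g U
    using assms(1) by unfold_locales
  show ?thesis
    unfolding einstein_density_def move_indices_def
    by (intro smooth_on_mult smooth_on_sum smooth_on_metric smooth_on_einstein_up_density[OF assms]
        open_chart)
qed

context singular_chart
begin

lemma einstein_up_density_regular:
  assumes p: "p \<in> regular_points"
  shows "einstein_up_density g p a b = einstein_up g p a b * det (g p)"
proof -
  have ricci: "ricci g p = contract_ricci (ginv g p) (riemann_lowered g p)"
    by (simp add: fun_eq_iff ricci_def contract_ricci_def riemann_ginv_riemann_lowered[OF p])
  have "einstein_up g p a b = move_indices (ginv g p)
      (\<lambda>c d. contract_ricci (ginv g p) (riemann_lowered g p) c d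
        - 1/2 * metric_trace (ginv g p) (contract_ricci (ginv g p) (riemann_lowered g p)) * g p $ c $ d) a b"
    unfolding einstein_up_def einstein_def scalar_curv_def move_indices_def metric_trace_def ricci ..
  then show ?thesis
    unfolding einstein_up_density_def
    using einstein_density_levi_civita[OF ginv_mul_metric[OF p] riemann_lowered_antisym12[OF p]
        riemann_lowered_antisym34 ginv_sym[OF p]]
    by (simp add: mult.commute)
qed

lemma einstein_density_regular:
  assumes p: "p \<in> regular_points"
  shows "einstein_density g p a b = einstein g p a b * det (g p)"
proof -
  have "einstein_up_density g p = (\<lambda>c d. det (g p) * move_indices (ginv g p) (einstein g p) c d)"
    by (simp add: fun_eq_iff einstein_up_density_regular[OF p] einstein_up_def move_indices_def)
  then have "einstein_density g p a b = det (g p) * move_indices (g p) (move_indices (ginv g p) (einstein g p)) a b"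
    unfolding einstein_density_def by (simp add: move_indices_def[of "g p"] sum_distrib_left mult_ac)
  then show ?thesis
    by (simp add: move_indices_inverse[OF metric_mul_ginv[OF p]])
qed

end

theorem theorem10p2:
  fixes g :: "real^4 \<Rightarrow> real^4^4" and U :: "(real^4) set"
  assumes "semi_regular_spacetime g U"
  shows "(\<exists>F :: real^4 \<Rightarrow> 4 \<Rightarrow> 4 \<Rightarrow> real.
            (\<forall>a b. smooth_on U (\<lambda>p. F p a b)) \<and>
            (\<forall>p\<in>U. det (g p) \<noteq> 0 \<longrightarrow> (\<forall>a b. F p a b = einstein g p a b * det (g p))))
       \<and> (\<exists>F :: real^4 \<Rightarrow> 4 \<Rightarrow> 4 \<Rightarrow> real.
            (\<forall>a b. smooth_on U (\<lambda>p. F p a b)) \<and>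
            (\<forall>p\<in>U. det (g p) \<noteq> 0 \<longrightarrow> (\<forall>a b. F p a b = einstein_up g p a b * det (g p))))"
proof -
  have chart: "singular_semi_riemannian g U" and semi_regular: "semi_regular g U"
    using assms unfolding semi_regular_spacetime_def by auto
  interpret singular_chart g U
    using chart by unfold_locales
  have regular: "p \<in> regular_points" if "p \<in> U" "det (g p) \<noteq> 0" for p
    using that unfolding regular_points_def by blast
  show ?thesis
    using smooth_on_einstein_density[OF chart semi_regular] einstein_density_regular[OF regular]
      smooth_on_einstein_up_density[OF chart semi_regular] einstein_up_density_regular[OF regular]
    by (intro conjI exI[of _ "einstein_density g"] exI[of _ "einstein_up_density g"]) auto
qed

end
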